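(* There is an absolute constant $C>0$ such that the following holds. Let $U^*,S,p_{ijk},\widehat p_{ijk},\mathcal{W}_{ijk},\delta_{ijk}$ be as in the context, and let $U\in\mathbb{R}^{n\times r}$ be fixed (independent of $\delta$) with unit-norm columns and $|U_{il}|\le2\|(U^* )^i\|$ for all $i,l$. Fix $q\in[r]$ and unit vectors $a,b,c\in\mathbb{R}^n$ with $|a_i|,|b_i|,|c_i|\le2\|(U^* )^i\|$ for all $i$. Let $B,R$ be the $n\times n$ diagonal matrices with $B_{ii}=\sum_{j,k}\delta_{ijk}\mathcal{W}_{ijk}U_{jq}^2U_{kq}^2$ and $R_{ii}=\sum_{j,k}\delta_{ijk}\mathcal{W}_{ijk}U_{jq}U_{kq}a_jb_k$. Let $\gamma\in(0,1]$. If $m\ge\frac{C}{\gamma^2}n\log(n)S^2$, then with probability at least $1-2n^{-9}$, $$\big\|(\langle U_q,a\rangle\langle U_q,b\rangle B-R)c\big\|\le\gamma\|b\|.$$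
   Context: $U^*\in\mathbb{R}^{n\times r}$ has orthonormal columns $U^*_l$ and rows $(U^* )^i$; $S=\sum_i\|(U^* )^i\|^{3/2}$; $p_{ijk}=\frac{\|(U^* )^i\|^{3/2}\|(U^* )^j\|^{3/2}+\|(U^* )^j\|^{3/2}\|(U^* )^k\|^{3/2}+\|(U^* )^k\|^{3/2}\|(U^* )^i\|^{3/2}}{3nS^2}$; $\widehat p_{ijk}=\min\{mp_{ijk},1\}$; $\mathcal{W}_{ijk}=1/\widehat p_{ijk}$ if $\widehat p_{ijk}>0$, else $0$; $\delta_{ijk}$ are independent Bernoulli$(\widehat p_{ijk})$ random variables. *)

theory Defs
  imports "HOL-Analysis.Analysis" "HOL-Probability.Probability"
begin

text \<open>Matrices are functions nat => nat => real, indexed from 0; an n x r matrix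
  uses entries with row index < n and column index < r.  Vectors in R^n are
  functions nat => real with components indexed by i < n.\<close>

definition vnorm :: "nat \<Rightarrow> (nat \<Rightarrow> real) \<Rightarrow> real" where
  "vnorm n x = sqrt (\<Sum>i<n. (x i)\<^sup>2)"

definition vinner :: "nat \<Rightarrow> (nat \<Rightarrow> real) \<Rightarrow> (nat \<Rightarrow> real) \<Rightarrow> real" where
  "vinner n x y = (\<Sum>i<n. x i * y i)"

definition row_norm :: "nat \<Rightarrow> (nat \<Rightarrow> nat \<Rightarrow> real) \<Rightarrow> nat \<Rightarrow> real" where
  "row_norm r M i = sqrt (\<Sum>l<r. (M i l)\<^sup>2)"

definition orthonormal_cols :: "nat \<Rightarrow> nat \<Rightarrow> (nat \<Rightarrow> nat \<Rightarrow> real) \<Rightarrow> bool" where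
  "orthonormal_cols n r M \<longleftrightarrow>
     (\<forall>l<r. \<forall>l'<r. (\<Sum>i<n. M i l * M i l') = (if l = l' then 1 else 0))"

definition Ssum :: "nat \<Rightarrow> nat \<Rightarrow> (nat \<Rightarrow> nat \<Rightarrow> real) \<Rightarrow> real" where
  "Ssum n r Us = (\<Sum>i<n. row_norm r Us i powr (3/2))"

definition pprob :: "nat \<Rightarrow> nat \<Rightarrow> (nat \<Rightarrow> nat \<Rightarrow> real) \<Rightarrow> nat \<Rightarrow> nat \<Rightarrow> nat \<Rightarrow> real" where
  "pprob n r Us i j k =
     (row_norm r Us i powr (3/2) * row_norm r Us j powr (3/2)
      + row_norm r Us j powr (3/2) * row_norm r Us k powr (3/2)
      + row_norm r Us k powr (3/2) * row_norm r Us i powr (3/2))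
     / (3 * real n * (Ssum n r Us)\<^sup>2)"

definition phat :: "nat \<Rightarrow> nat \<Rightarrow> (nat \<Rightarrow> nat \<Rightarrow> real) \<Rightarrow> real \<Rightarrow> nat \<Rightarrow> nat \<Rightarrow> nat \<Rightarrow> real" where
  "phat n r Us m i j k = min (m * pprob n r Us i j k) 1"

definition Wt :: "nat \<Rightarrow> nat \<Rightarrow> (nat \<Rightarrow> nat \<Rightarrow> real) \<Rightarrow> real \<Rightarrow> nat \<Rightarrow> nat \<Rightarrow> nat \<Rightarrow> real" where
  "Wt n r Us m i j k = (if phat n r Us m i j k > 0 then 1 / phat n r Us m i j k else 0)"

definition delta_pmf :: "nat \<Rightarrow> nat \<Rightarrow> (nat \<Rightarrow> nat \<Rightarrow> real) \<Rightarrow> real \<Rightarrow> (nat \<times> nat \<times> nat \<Rightarrow> bool) pmf" where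
  "delta_pmf n r Us m =
     Pi_pmf ({..<n} \<times> {..<n} \<times> {..<n}) False
       (\<lambda>(i, j, k). bernoulli_pmf (phat n r Us m i j k))"

definition Bdiag where
  "Bdiag n r Us m U q \<delta> i =
     (\<Sum>j<n. \<Sum>k<n. of_bool (\<delta> (i, j, k)) * Wt n r Us m i j k * (U j q)\<^sup>2 * (U k q)\<^sup>2)"

definition Rdiag where
  "Rdiag n r Us m U q a b \<delta> i =
     (\<Sum>j<n. \<Sum>k<n. of_bool (\<delta> (i, j, k)) * Wt n r Us m i j k * U j q * U k q * a j * b k)"

end

theory Submission
  imports Defs
begin

text \<open>
  Fix a row i and write alpha = <U_q,a><U_q,b>. The i-th diagonal entry of alpha B - R is
  sum_jk delta_ijk W_ijk t_jk with t_jk = alpha U_jq^2 U_kq^2 - U_jq U_kq a_j b_k. Since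
  p_ijk W_ijk t_jk = t_jk (hats dropped) and sum_jk t_jk = 0, this entry is a centred sum of
  independent Bernoulli variables. Incoherence gives |t_jk| <= 16 rho_j rho_k <= 48 n S^2 p_ijk,
  where rho_j = ||(U*)^j||^(3/2), so every non-degenerate summand is at most 48 n S^2 / m and
  the variance is at most 96 n S^2 / m. A Bernstein-type Chernoff bound, resting on
  exp u <= 1 + u + u^2 for |u| <= 1, shows that the entry exceeds gamma with probability at
  most 2 n^(-10) once m >= 3840 gamma^(-2) n log n S^2. A union bound over the n rows
  finishes the proof, because a diagonal matrix with entries bounded by gamma shrinks every
  vector by the factor gamma.
\<close>

lemma exp_le_one_plus_plus_square:
  fixes u :: real
  assumes "\<bar>u\<bar> \<le> 1"
  shows "exp u \<le> 1 + u + u\<^sup>2"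
proof (cases "0 \<le> u")
  case True
  then show ?thesis using exp_bound[of u] assms by simp
next
  case False
  define v where "v = - u"
  have v: "0 \<le> v" using False by (simp add: v_def)
  have "1 - v + v\<^sup>2 = (v - 1/2)\<^sup>2 + 3/4"
    by (simp add: power2_eq_square algebra_simps)
  then have pos: "0 < 1 - v + v\<^sup>2"
    by (metis add_nonneg_pos zero_le_power2 zero_less_divide_iff zero_less_numeral)
  \<comment> \<open>multiply the claimed bound for exp (-v) by the quadratic Taylor lower bound of exp v\<close>
  have "(1 - v + v\<^sup>2) * (2 + 2 * v + v\<^sup>2) = 2 + v\<^sup>2 + v ^ 3 + v ^ 4"
    by (simp add: algebra_simps power2_eq_square power3_eq_cube power4_eq_xxxx)
  then have "2 \<le> (1 - v + v\<^sup>2) * (2 + 2 * v + v\<^sup>2)"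
    using v by simp
  also have "\<dots> \<le> (1 - v + v\<^sup>2) * (2 * exp v)"
    using exp_lower_Taylor_quadratic[OF v] pos by (intro mult_left_mono) auto
  finally have "1 \<le> (1 - v + v\<^sup>2) * exp v" by simp
  then show ?thesis by (simp add: v_def exp_minus field_simps)
qed

lemma bernoulli_centered_mgf_le:
  fixes p u :: real
  assumes p: "0 \<le> p" "p \<le> 1" and u: "\<bar>u\<bar> \<le> 1"
  shows "(\<integral>b. exp (u * (of_bool b - p)) \<partial>bernoulli_pmf p) \<le> exp (p * (1 - p) * u\<^sup>2)"
proof -
  have small: "\<bar>u * (of_bool b - p)\<bar> \<le> 1" for b
    using p u by (auto simp: abs_mult intro!: mult_le_one)
  have "(\<integral>b. exp (u * (of_bool b - p)) \<partial>bernoulli_pmf p)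
      = p * exp (u * (1 - p)) + (1 - p) * exp (u * (0 - p))"
    using p by (simp add: mult.commute)
  also have "\<dots> \<le> p * (1 + u * (1 - p) + (u * (1 - p))\<^sup>2) + (1 - p) * (1 + u * (0 - p) + (u * (0 - p))\<^sup>2)"
    using p exp_le_one_plus_plus_square[OF small[of True]] exp_le_one_plus_plus_square[OF small[of False]]
    by (intro add_mono mult_left_mono) auto
  also have "\<dots> = 1 + p * (1 - p) * u\<^sup>2"
    by (simp add: power2_eq_square algebra_simps)
  also have "\<dots> \<le> exp (p * (1 - p) * u\<^sup>2)"
    by (rule exp_ge_add_one_self[simplified add.commute])
  finally show ?thesis .
qed

lemma prob_Pi_bernoulli_sum_ge:
  fixes A :: "'a set" and P s :: "'a \<Rightarrow> real" and l \<epsilon> :: real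
  assumes fin: "finite A" and P: "\<And>x. x \<in> A \<Longrightarrow> 0 \<le> P x \<and> P x \<le> 1" and l: "0 < l"
    and small: "\<And>x. x \<in> A \<Longrightarrow> P x < 1 \<Longrightarrow> \<bar>l * s x\<bar> \<le> 1"
  shows "measure_pmf.prob (Pi_pmf A False (\<lambda>x. bernoulli_pmf (P x)))
           {\<delta>. \<epsilon> \<le> (\<Sum>x\<in>A. (of_bool (\<delta> x) - P x) * s x)}
         \<le> exp (l\<^sup>2 * (\<Sum>x\<in>A. P x * (1 - P x) * (s x)\<^sup>2) - l * \<epsilon>)"
proof -
  define D where "D = Pi_pmf A False (\<lambda>x. bernoulli_pmf (P x))"
  define Z where "Z \<delta> = (\<Sum>x\<in>A. (of_bool (\<delta> x) - P x) * s x)" for \<delta>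
  have "finite (set_pmf D)"
    unfolding D_def by (rule finite_subset[OF set_Pi_pmf_subset'[OF fin]]) (auto intro: finite_PiE_dflt fin)
  then have integrable: "integrable (measure_pmf D) f" for f :: "_ \<Rightarrow> real"
    by (rule integrable_measure_pmf_finite)
  have "measure_pmf.prob D {\<delta>. \<epsilon> \<le> Z \<delta>}
      = measure_pmf.prob D {\<delta> \<in> space (measure_pmf D). exp (l * \<epsilon>) \<le> exp (l * Z \<delta>)}"
    using l by simp
  also have "\<dots> \<le> (\<integral>\<delta>. exp (l * Z \<delta>) \<partial>D) / exp (l * \<epsilon>)"
    by (intro integral_Markov_inequality_measure[OF integrable] AE_pmfI) auto
  also have "(\<integral>\<delta>. exp (l * Z \<delta>) \<partial>D) = (\<Prod>x\<in>A. \<integral>b. exp ((l * s x) * (of_bool b - P x)) \<partial>bernoulli_pmf (P x))"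
  proof -
    have "exp (l * Z \<delta>) = (\<Prod>x\<in>A. exp ((l * s x) * (of_bool (\<delta> x) - P x)))" for \<delta>
      unfolding Z_def sum_distrib_left exp_sum[OF fin] by (simp add: mult_ac)
    then show ?thesis
      unfolding D_def
      by (simp only:) (rule expectation_prod_Pi_pmf[OF fin, where f = "\<lambda>x b. exp ((l * s x) * (of_bool b - P x))"],
          auto intro: integrable_measure_pmf_finite)
  qed
  also have "\<dots> \<le> (\<Prod>x\<in>A. exp (P x * (1 - P x) * (l * s x)\<^sup>2))"
  proof (intro prod_mono conjI)
    fix x assume x: "x \<in> A"
    show "0 \<le> (\<integral>b. exp ((l * s x) * (of_bool b - P x)) \<partial>bernoulli_pmf (P x))"
      by (intro Bochner_Integration.integral_nonneg) auto
    show "(\<integral>b. exp ((l * s x) * (of_bool b - P x)) \<partial>bernoulli_pmf (P x)) \<le> exp (P x * (1 - P x) * (l * s x)\<^sup>2)"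
    proof (cases "P x < 1")
      case True
      then show ?thesis using P[OF x] small[OF x] by (intro bernoulli_centered_mgf_le) auto
    next
      case False
      then show ?thesis using P[OF x] by simp
    qed
  qed
  also have "\<dots> = exp (l\<^sup>2 * (\<Sum>x\<in>A. P x * (1 - P x) * (s x)\<^sup>2))"
    by (simp add: exp_sum[OF fin] sum_distrib_left power_mult_distrib mult_ac)
  finally have "measure_pmf.prob D {\<delta>. \<epsilon> \<le> Z \<delta>}
      \<le> exp (l\<^sup>2 * (\<Sum>x\<in>A. P x * (1 - P x) * (s x)\<^sup>2)) / exp (l * \<epsilon>)"
    by (simp add: divide_right_mono)
  then show ?thesis
    unfolding D_def Z_def by (simp add: exp_diff)
qed

lemma prob_Pi_bernoulli_abs_sum_ge:
  fixes A :: "'a set" and P s :: "'a \<Rightarrow> real" and M V \<epsilon> :: real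
  assumes fin: "finite A" and P: "\<And>x. x \<in> A \<Longrightarrow> 0 \<le> P x \<and> P x \<le> 1"
    and M: "\<And>x. x \<in> A \<Longrightarrow> P x < 1 \<Longrightarrow> \<bar>s x\<bar> \<le> M"
    and V: "0 < V" "(\<Sum>x\<in>A. P x * (1 - P x) * (s x)\<^sup>2) \<le> V"
    and \<epsilon>: "0 < \<epsilon>" "\<epsilon> * M \<le> 2 * V"
  shows "measure_pmf.prob (Pi_pmf A False (\<lambda>x. bernoulli_pmf (P x)))
           {\<delta>. \<epsilon> \<le> \<bar>\<Sum>x\<in>A. (of_bool (\<delta> x) - P x) * s x\<bar>}
         \<le> 2 * exp (- (\<epsilon>\<^sup>2 / (4 * V)))"
proof -
  define D where "D = Pi_pmf A False (\<lambda>x. bernoulli_pmf (P x))"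
  define l where "l = \<epsilon> / (2 * V)"
  have l: "0 < l" using V \<epsilon> by (simp add: l_def)
  have one_side: "measure_pmf.prob D {\<delta>. \<epsilon> \<le> (\<Sum>x\<in>A. (of_bool (\<delta> x) - P x) * t x)}
      \<le> exp (- (\<epsilon>\<^sup>2 / (4 * V)))" if t: "\<And>x. \<bar>t x\<bar> = \<bar>s x\<bar>" for t
  proof -
    have "\<bar>l * t x\<bar> \<le> 1" if "x \<in> A" "P x < 1" for x
    proof -
      have "\<bar>l * t x\<bar> \<le> l * M" using M[OF that] t[of x] l by (simp add: abs_mult)
      also have "\<dots> \<le> 1" using \<epsilon> V by (simp add: l_def field_simps)
      finally show ?thesis .
    qed
    then have "measure_pmf.prob D {\<delta>. \<epsilon> \<le> (\<Sum>x\<in>A. (of_bool (\<delta> x) - P x) * t x)}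
        \<le> exp (l\<^sup>2 * (\<Sum>x\<in>A. P x * (1 - P x) * (t x)\<^sup>2) - l * \<epsilon>)"
      unfolding D_def using fin P l by (intro prob_Pi_bernoulli_sum_ge) auto
    also have "\<dots> \<le> exp (l\<^sup>2 * V - l * \<epsilon>)"
    proof -
      have "(t x)\<^sup>2 = (s x)\<^sup>2" for x by (metis power2_abs t)
      then show ?thesis using V by (simp add: mult_left_mono)
    qed
    also have "l\<^sup>2 * V - l * \<epsilon> = - (\<epsilon>\<^sup>2 / (4 * V))"
      using V by (simp add: l_def field_simps power2_eq_square)
    finally show ?thesis .
  qed
  have "{\<delta>. \<epsilon> \<le> \<bar>\<Sum>x\<in>A. (of_bool (\<delta> x) - P x) * s x\<bar>}
      \<subseteq> {\<delta>. \<epsilon> \<le> (\<Sum>x\<in>A. (of_bool (\<delta> x) - P x) * s x)}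
        \<union> {\<delta>. \<epsilon> \<le> (\<Sum>x\<in>A. (of_bool (\<delta> x) - P x) * - s x)}"
  proof
    fix \<delta> assume "\<delta> \<in> {\<delta>. \<epsilon> \<le> \<bar>\<Sum>x\<in>A. (of_bool (\<delta> x) - P x) * s x\<bar>}"
    moreover have "(\<Sum>x\<in>A. (of_bool (\<delta> x) - P x) * - s x) = - (\<Sum>x\<in>A. (of_bool (\<delta> x) - P x) * s x)"
      by (simp add: sum_negf)
    ultimately show "\<delta> \<in> {\<delta>. \<epsilon> \<le> (\<Sum>x\<in>A. (of_bool (\<delta> x) - P x) * s x)}
        \<union> {\<delta>. \<epsilon> \<le> (\<Sum>x\<in>A. (of_bool (\<delta> x) - P x) * - s x)}"
      by (simp add: abs_le_iff[symmetric] del: mult_minus_right) linarith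
  qed
  then have "measure_pmf.prob D {\<delta>. \<epsilon> \<le> \<bar>\<Sum>x\<in>A. (of_bool (\<delta> x) - P x) * s x\<bar>}
      \<le> measure_pmf.prob D ({\<delta>. \<epsilon> \<le> (\<Sum>x\<in>A. (of_bool (\<delta> x) - P x) * s x)}
        \<union> {\<delta>. \<epsilon> \<le> (\<Sum>x\<in>A. (of_bool (\<delta> x) - P x) * - s x)})"
    by (rule measure_pmf.finite_measure_mono) simp
  also have "\<dots> \<le> measure_pmf.prob D {\<delta>. \<epsilon> \<le> (\<Sum>x\<in>A. (of_bool (\<delta> x) - P x) * s x)}
        + measure_pmf.prob D {\<delta>. \<epsilon> \<le> (\<Sum>x\<in>A. (of_bool (\<delta> x) - P x) * - s x)}"
    by (rule measure_Un_le) simp_all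
  also have "\<dots> \<le> 2 * exp (- (\<epsilon>\<^sup>2 / (4 * V)))"
    using one_side[of s] one_side[of "\<lambda>x. - s x"] by simp
  finally show ?thesis unfolding D_def .
qed

lemma powr_three_halves:
  fixes x :: real
  assumes "0 \<le> x" shows "x powr (3/2) = x * sqrt x"
proof -
  have "x powr (3/2) = x powr (1 + 1/2)"
    by simp
  also have "\<dots> = x powr 1 * x powr (1/2)"
    by (rule powr_add)
  finally have "x powr (3/2) = x powr 1 * x powr (1/2)" .
  then show ?thesis
    using assms by (cases "x = 0") (simp_all add: powr_half_sqrt)
qed

lemma sum_abs_mult_le_1:
  fixes x y :: "nat \<Rightarrow> real"
  assumes "(\<Sum>j<n. (x j)\<^sup>2) = 1" "(\<Sum>j<n. (y j)\<^sup>2) = 1"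
  shows "(\<Sum>j<n. \<bar>x j * y j\<bar>) \<le> 1"
proof -
  have "\<bar>x j * y j\<bar> \<le> ((x j)\<^sup>2 + (y j)\<^sup>2) / 2" for j
    using sum_squares_bound[of "\<bar>x j\<bar>" "\<bar>y j\<bar>"] by (simp add: abs_mult)
  then have "(\<Sum>j<n. \<bar>x j * y j\<bar>) \<le> (\<Sum>j<n. ((x j)\<^sup>2 + (y j)\<^sup>2) / 2)"
    by (intro sum_mono)
  also have "\<dots> = 1"
    using assms by (simp add: sum.distrib flip: sum_divide_distrib)
  finally show ?thesis .
qed

lemma sum_lessThan_cube_slice:
  fixes F :: "nat \<times> nat \<times> nat \<Rightarrow> real"
  assumes "i < n" and "\<And>i' j k. i' \<noteq> i \<Longrightarrow> F (i', j, k) = 0"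
  shows "(\<Sum>x\<in>{..<n} \<times> {..<n} \<times> {..<n}. F x) = (\<Sum>j<n. \<Sum>k<n. F (i, j, k))"
proof -
  have "(\<Sum>x\<in>{..<n} \<times> {..<n} \<times> {..<n}. F x) = (\<Sum>i'<n. \<Sum>j<n. \<Sum>k<n. F (i', j, k))"
    by (simp add: sum.cartesian_product')
  also have "\<dots> = (\<Sum>j<n. \<Sum>k<n. F (i, j, k))"
    using assms by (subst sum.remove[of _ i]) (auto intro!: sum.neutral)
  finally show ?thesis .
qed

lemma vnorm_mult_le:
  assumes z: "\<And>i. i < n \<Longrightarrow> \<bar>z i\<bar> \<le> \<gamma>"
  shows "vnorm n (\<lambda>i. z i * c i) \<le> \<gamma> * vnorm n c"
proof (cases "n = 0")
  case True
  then show ?thesis by (simp add: vnorm_def)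
next
  case False
  then have \<gamma>: "0 \<le> \<gamma>" using z[of 0] by linarith
  have "(z i)\<^sup>2 \<le> \<gamma>\<^sup>2" if "i < n" for i
    using z[OF that] \<gamma> by (simp add: abs_le_square_iff[symmetric])
  then have "(\<Sum>i<n. (z i * c i)\<^sup>2) \<le> (\<Sum>i<n. \<gamma>\<^sup>2 * (c i)\<^sup>2)"
    by (intro sum_mono) (simp add: power_mult_distrib mult_right_mono)
  then have "vnorm n (\<lambda>i. z i * c i) \<le> sqrt (\<gamma>\<^sup>2 * (\<Sum>i<n. (c i)\<^sup>2))"
    unfolding vnorm_def by (simp add: sum_distrib_left)
  also have "\<dots> = \<gamma> * vnorm n c"
    using \<gamma> by (simp add: vnorm_def real_sqrt_mult)
  finally show ?thesis .
qed

locale incoherent_vectors =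
  fixes n r :: nat and Us U :: "nat \<Rightarrow> nat \<Rightarrow> real" and q :: nat and a b :: "nat \<Rightarrow> real"
  assumes U_unit: "(\<Sum>j<n. (U j q)\<^sup>2) = 1"
    and a_unit: "(\<Sum>j<n. (a j)\<^sup>2) = 1" and b_unit: "(\<Sum>j<n. (b j)\<^sup>2) = 1"
    and incoherent: "\<And>j. j < n \<Longrightarrow> \<bar>U j q\<bar> \<le> 2 * row_norm r Us j \<and> \<bar>a j\<bar> \<le> 2 * row_norm r Us j
                        \<and> \<bar>b j\<bar> \<le> 2 * row_norm r Us j"
begin

abbreviation "alpha \<equiv> vinner n (\<lambda>j. U j q) a * vinner n (\<lambda>j. U j q) b"

abbreviation "coef j k \<equiv> alpha * (U j q)\<^sup>2 * (U k q)\<^sup>2 - U j q * U k q * a j * b k"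

abbreviation "rho j \<equiv> row_norm r Us j powr (3/2)"

lemma abs_alpha_le_1: "\<bar>alpha\<bar> \<le> 1"
proof -
  have "\<bar>vinner n (\<lambda>j. U j q) x\<bar> \<le> 1" if "(\<Sum>j<n. (x j)\<^sup>2) = 1" for x
    unfolding vinner_def using sum_abs[of _ "{..<n}"] sum_abs_mult_le_1[OF U_unit that]
    by (rule order_trans)
  from this[OF a_unit] this[OF b_unit] show ?thesis
    by (simp add: abs_mult mult_le_one)
qed

lemma abs_coef_le:
  "\<bar>coef j k\<bar> \<le> (U j q)\<^sup>2 * (U k q)\<^sup>2 + \<bar>U j q * a j\<bar> * \<bar>U k q * b k\<bar>"
proof -
  have "\<bar>alpha * ((U j q)\<^sup>2 * (U k q)\<^sup>2)\<bar> = \<bar>alpha\<bar> * ((U j q)\<^sup>2 * (U k q)\<^sup>2)"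
    by (simp add: abs_mult)
  also have "\<dots> \<le> 1 * ((U j q)\<^sup>2 * (U k q)\<^sup>2)"
    by (intro mult_right_mono abs_alpha_le_1) simp
  finally show ?thesis
    using abs_triangle_ineq4[of "alpha * (U j q)\<^sup>2 * (U k q)\<^sup>2" "U j q * U k q * a j * b k"]
    by (simp add: abs_mult mult_ac)
qed

lemma sum_coef_eq_0: "(\<Sum>j<n. \<Sum>k<n. coef j k) = 0"
proof -
  have "(\<Sum>j<n. \<Sum>k<n. coef j k)
      = alpha * (\<Sum>j<n. \<Sum>k<n. (U j q)\<^sup>2 * (U k q)\<^sup>2) - (\<Sum>j<n. \<Sum>k<n. (U j q * a j) * (U k q * b k))"
    by (simp add: sum_subtractf sum_distrib_left algebra_simps)
  also have "\<dots> = alpha * ((\<Sum>j<n. (U j q)\<^sup>2) * (\<Sum>k<n. (U k q)\<^sup>2))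
      - (\<Sum>j<n. U j q * a j) * (\<Sum>k<n. U k q * b k)"
    by (simp only: sum_product)
  finally show ?thesis by (simp add: U_unit vinner_def)
qed

lemma sum_abs_coef_le_2: "(\<Sum>j<n. \<Sum>k<n. \<bar>coef j k\<bar>) \<le> 2"
proof -
  have "(\<Sum>j<n. \<Sum>k<n. \<bar>coef j k\<bar>)
      \<le> (\<Sum>j<n. \<Sum>k<n. (U j q)\<^sup>2 * (U k q)\<^sup>2 + \<bar>U j q * a j\<bar> * \<bar>U k q * b k\<bar>)"
    by (intro sum_mono abs_coef_le)
  also have "\<dots> = (\<Sum>j<n. (U j q)\<^sup>2) * (\<Sum>k<n. (U k q)\<^sup>2) + (\<Sum>j<n. \<bar>U j q * a j\<bar>) * (\<Sum>k<n. \<bar>U k q * b k\<bar>)"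
    by (simp add: sum.distrib sum_product)
  also have "\<dots> \<le> 1 * 1 + 1 * 1"
    using sum_abs_mult_le_1[OF U_unit a_unit] sum_abs_mult_le_1[OF U_unit b_unit] U_unit
    by (intro add_mono mult_mono) (auto intro: sum_nonneg)
  finally show ?thesis by simp
qed

lemma abs_U_le_sqrt_row_norm:
  assumes "j < n" shows "\<bar>U j q\<bar> \<le> sqrt 2 * sqrt (row_norm r Us j)"
proof -
  have "(U j q)\<^sup>2 \<le> 1"
    using U_unit member_le_sum[of j "{..<n}" "\<lambda>j. (U j q)\<^sup>2"] assms by simp
  then have "\<bar>U j q\<bar> * \<bar>U j q\<bar> \<le> 1 * (2 * row_norm r Us j)"
    using incoherent[OF assms] by (intro mult_mono) (auto simp: abs_square_le_1)
  then have "sqrt ((U j q)\<^sup>2) \<le> sqrt (2 * row_norm r Us j)"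
    by (intro real_sqrt_le_mono) (simp add: power2_eq_square)
  then show ?thesis by (simp add: real_sqrt_mult)
qed

lemma abs_coef_le_rho:
  assumes j: "j < n" and k: "k < n" shows "\<bar>coef j k\<bar> \<le> 16 * rho j * rho k"
proof -
  have rn: "0 \<le> row_norm r Us i" for i by (simp add: row_norm_def sum_nonneg)
  have "\<bar>coef j k\<bar> \<le> (\<bar>U j q\<bar> * \<bar>U k q\<bar>) * (\<bar>U j q\<bar> * \<bar>U k q\<bar> + \<bar>a j\<bar> * \<bar>b k\<bar>)"
    using abs_coef_le[of j k] by (simp add: abs_mult power2_eq_square algebra_simps)
  also have "\<dots> \<le> ((sqrt 2 * sqrt (row_norm r Us j)) * (sqrt 2 * sqrt (row_norm r Us k)))
                 * ((2 * row_norm r Us j) * (2 * row_norm r Us k) + (2 * row_norm r Us j) * (2 * row_norm r Us k))"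
    using abs_U_le_sqrt_row_norm[OF j] abs_U_le_sqrt_row_norm[OF k] incoherent[OF j] incoherent[OF k] rn
    by (intro mult_mono add_mono) auto
  also have "\<dots> = 16 * (row_norm r Us j * sqrt (row_norm r Us j)) * (row_norm r Us k * sqrt (row_norm r Us k))"
    by (simp add: algebra_simps)
  also have "\<dots> = 16 * rho j * rho k"
    using rn by (simp add: powr_three_halves)
  finally show ?thesis .
qed

lemma Ssum_pos: "0 < Ssum n r Us"
proof -
  have "\<exists>j<n. U j q \<noteq> 0"
  proof (rule ccontr)
    assume "\<not> ?thesis"
    then have "(\<Sum>j<n. (U j q)\<^sup>2) = 0" by (intro sum.neutral) auto
    with U_unit show False by simp
  qed
  then obtain j where j: "j < n" "U j q \<noteq> 0"
    by blast
  then have "0 < row_norm r Us j" using incoherent[OF j(1)] by auto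
  then have "0 < rho j" by simp
  also have "rho j \<le> Ssum n r Us"
    unfolding Ssum_def using j(1) by (intro member_le_sum) auto
  finally show ?thesis .
qed

lemma n_pos: "0 < n"
  using U_unit by (cases n) auto

lemma abs_coef_le_pprob:
  assumes "j < n" "k < n" shows "\<bar>coef j k\<bar> \<le> 48 * real n * (Ssum n r Us)\<^sup>2 * pprob n r Us i j k"
proof -
  have "3 * real n * (Ssum n r Us)\<^sup>2 * pprob n r Us i j k = rho i * rho j + rho j * rho k + rho k * rho i"
    using n_pos Ssum_pos unfolding pprob_def by simp
  then have "rho j * rho k \<le> 3 * real n * (Ssum n r Us)\<^sup>2 * pprob n r Us i j k"
    by simp
  then show ?thesis using abs_coef_le_rho[OF assms] by linarith
qed

context
  fixes m :: real
  assumes m_pos: "0 < m"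
begin

definition noise_scale :: real where
  "noise_scale = real n * (Ssum n r Us)\<^sup>2 / m"

lemma noise_scale_pos: "0 < noise_scale"
  using n_pos Ssum_pos m_pos by (simp add: noise_scale_def)

lemma phat_bounds: "0 \<le> phat n r Us m i j k \<and> phat n r Us m i j k \<le> 1"
proof -
  have "0 \<le> pprob n r Us i j k"
    unfolding pprob_def by (intro divide_nonneg_nonneg add_nonneg_nonneg mult_nonneg_nonneg) auto
  then show ?thesis
    using m_pos unfolding phat_def by simp
qed

lemma phat_eq_if_less_1: "phat n r Us m i j k < 1 \<Longrightarrow> phat n r Us m i j k = m * pprob n r Us i j k"
  unfolding phat_def by (simp add: min_def split: if_splits)

lemma phat_mult_Wt_coef:
  assumes "j < n" "k < n" shows "phat n r Us m i j k * (Wt n r Us m i j k * coef j k) = coef j k"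
proof (cases "phat n r Us m i j k > 0")
  case True
  then show ?thesis unfolding Wt_def by simp
next
  case False
  \<comment> \<open>an entry that is never sampled has p = 0, and then coef j k = 0\<close>
  then have "pprob n r Us i j k = 0"
    using phat_bounds[of i j k] phat_eq_if_less_1[of i j k] m_pos by simp
  then show ?thesis using abs_coef_le_pprob[OF assms, of i] by simp
qed

lemma abs_Wt_coef_le:
  assumes "j < n" "k < n" "phat n r Us m i j k < 1"
  shows "\<bar>Wt n r Us m i j k * coef j k\<bar> \<le> 48 * noise_scale"
proof (cases "phat n r Us m i j k > 0")
  case False
  then show ?thesis using noise_scale_pos unfolding Wt_def by simp
next
  case True
  then have p: "0 < pprob n r Us i j k" and phat: "phat n r Us m i j k = m * pprob n r Us i j k"
    using phat_eq_if_less_1[OF assms(3)] m_pos by (simp_all add: zero_less_mult_iff)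
  have "\<bar>Wt n r Us m i j k * coef j k\<bar> = \<bar>coef j k\<bar> / (m * pprob n r Us i j k)"
    using True phat p m_pos by (simp add: Wt_def abs_mult)
  also have "\<dots> \<le> 48 * real n * (Ssum n r Us)\<^sup>2 * pprob n r Us i j k / (m * pprob n r Us i j k)"
    using p m_pos by (intro divide_right_mono abs_coef_le_pprob assms) simp_all
  also have "\<dots> = 48 * noise_scale"
    using p by (simp add: noise_scale_def)
  finally show ?thesis .
qed

lemma sum_variance_le:
  "(\<Sum>j<n. \<Sum>k<n. phat n r Us m i j k * (1 - phat n r Us m i j k) * (Wt n r Us m i j k * coef j k)\<^sup>2)
     \<le> 96 * noise_scale"
proof -
  have "phat n r Us m i j k * (1 - phat n r Us m i j k) * (Wt n r Us m i j k * coef j k)\<^sup>2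
        \<le> 48 * noise_scale * \<bar>coef j k\<bar>" if "j < n" "k < n" for j k
  proof (cases "phat n r Us m i j k < 1")
    case True
    have "phat n r Us m i j k * (1 - phat n r Us m i j k) * (Wt n r Us m i j k * coef j k)\<^sup>2
        \<le> phat n r Us m i j k * (Wt n r Us m i j k * coef j k)\<^sup>2"
      using phat_bounds[of i j k] by (intro mult_right_mono) (auto simp: mult_left_le)
    also have "\<dots> = coef j k * (Wt n r Us m i j k * coef j k)"
      using phat_mult_Wt_coef[OF that, of i] by (simp add: power2_eq_square mult.assoc[symmetric])
    also have "\<dots> \<le> \<bar>coef j k\<bar> * \<bar>Wt n r Us m i j k * coef j k\<bar>"
      by (simp only: abs_mult[symmetric] abs_ge_self)
    also have "\<dots> \<le> \<bar>coef j k\<bar> * (48 * noise_scale)"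
      using abs_Wt_coef_le[OF that True] by (intro mult_left_mono) simp_all
    finally show ?thesis by (simp add: mult_ac)
  next
    case False
    then have "phat n r Us m i j k = 1" using phat_bounds[of i j k] by simp
    moreover have "0 \<le> 48 * noise_scale * \<bar>coef j k\<bar>"
      by (intro mult_nonneg_nonneg) (use noise_scale_pos in auto)
    ultimately show ?thesis by simp
  qed
  then have "(\<Sum>j<n. \<Sum>k<n. phat n r Us m i j k * (1 - phat n r Us m i j k) * (Wt n r Us m i j k * coef j k)\<^sup>2)
      \<le> (\<Sum>j<n. \<Sum>k<n. 48 * noise_scale * \<bar>coef j k\<bar>)"
    by (intro sum_mono) auto
  also have "\<dots> = 48 * noise_scale * (\<Sum>j<n. \<Sum>k<n. \<bar>coef j k\<bar>)"
    by (simp only: sum_distrib_left)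
  also have "\<dots> \<le> 48 * noise_scale * 2"
    using sum_abs_coef_le_2 noise_scale_pos by (intro mult_left_mono) auto
  finally show ?thesis by simp
qed

abbreviation "sample_prob \<equiv> \<lambda>(i, j, k). phat n r Us m i j k"

abbreviation "slice_weight i \<equiv> \<lambda>(i', j, k). if i' = i then Wt n r Us m i j k * coef j k else 0"

lemma delta_pmf_eq_Pi_pmf:
  "delta_pmf n r Us m = Pi_pmf ({..<n} \<times> {..<n} \<times> {..<n}) False (\<lambda>x. bernoulli_pmf (sample_prob x))"
  unfolding delta_pmf_def by (simp add: case_prod_beta')

lemma deviation_eq_centered_sum:
  assumes i: "i < n"
  shows "alpha * Bdiag n r Us m U q \<delta> i - Rdiag n r Us m U q a b \<delta> i
       = (\<Sum>x\<in>{..<n} \<times> {..<n} \<times> {..<n}. (of_bool (\<delta> x) - sample_prob x) * slice_weight i x)"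
proof -
  have "(\<Sum>x\<in>{..<n} \<times> {..<n} \<times> {..<n}. (of_bool (\<delta> x) - sample_prob x) * slice_weight i x)
      = (\<Sum>j<n. \<Sum>k<n. (of_bool (\<delta> (i, j, k)) - phat n r Us m i j k) * (Wt n r Us m i j k * coef j k))"
    by (subst sum_lessThan_cube_slice[OF i]) auto
  also have "\<dots> = (\<Sum>j<n. \<Sum>k<n. of_bool (\<delta> (i, j, k)) * (Wt n r Us m i j k * coef j k) - coef j k)"
  proof (intro sum.cong refl)
    fix j k assume "j \<in> {..<n}" "k \<in> {..<n}"
    then have "phat n r Us m i j k * (Wt n r Us m i j k * coef j k) = coef j k"
      by (intro phat_mult_Wt_coef) auto
    then show "(of_bool (\<delta> (i, j, k)) - phat n r Us m i j k) * (Wt n r Us m i j k * coef j k)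
        = of_bool (\<delta> (i, j, k)) * (Wt n r Us m i j k * coef j k) - coef j k"
      by (simp only: left_diff_distrib)
  qed
  also have "\<dots> = (\<Sum>j<n. \<Sum>k<n. of_bool (\<delta> (i, j, k)) * (Wt n r Us m i j k * coef j k)) - (\<Sum>j<n. \<Sum>k<n. coef j k)"
    by (simp only: sum_subtractf)
  also have "\<dots> = alpha * Bdiag n r Us m U q \<delta> i - Rdiag n r Us m U q a b \<delta> i"
    unfolding sum_coef_eq_0 Bdiag_def Rdiag_def
    by (simp add: sum_distrib_left sum_subtractf algebra_simps)
  finally show ?thesis ..
qed

lemma prob_deviation_ge:
  assumes i: "i < n" and \<gamma>: "0 < \<gamma>" "\<gamma> \<le> 1"
  shows "measure_pmf.prob (delta_pmf n r Us m)
           {\<delta>. \<gamma> \<le> \<bar>alpha * Bdiag n r Us m U q \<delta> i - Rdiag n r Us m U q a b \<delta> i\<bar>}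
         \<le> 2 * exp (- (\<gamma>\<^sup>2 / (384 * noise_scale)))"
proof -
  have "measure_pmf.prob (delta_pmf n r Us m)
          {\<delta>. \<gamma> \<le> \<bar>\<Sum>x\<in>{..<n} \<times> {..<n} \<times> {..<n}. (of_bool (\<delta> x) - sample_prob x) * slice_weight i x\<bar>}
      \<le> 2 * exp (- (\<gamma>\<^sup>2 / (4 * (96 * noise_scale))))"
    unfolding delta_pmf_eq_Pi_pmf
  proof (rule prob_Pi_bernoulli_abs_sum_ge)
    show "(\<Sum>x\<in>{..<n} \<times> {..<n} \<times> {..<n}. sample_prob x * (1 - sample_prob x) * (slice_weight i x)\<^sup>2) \<le> 96 * noise_scale"
      using sum_variance_le[of i] by (subst sum_lessThan_cube_slice[OF i]) auto
    show "\<bar>slice_weight i x\<bar> \<le> 48 * noise_scale"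
      if "x \<in> {..<n} \<times> {..<n} \<times> {..<n}" "sample_prob x < 1" for x
      using that abs_Wt_coef_le noise_scale_pos by (auto split: prod.splits)
    have "\<gamma> * (48 * noise_scale) \<le> 48 * noise_scale"
      using \<gamma> noise_scale_pos by (intro mult_left_le_one_le) auto
    also have "\<dots> \<le> 2 * (96 * noise_scale)"
      using noise_scale_pos by linarith
    finally show "\<gamma> * (48 * noise_scale) \<le> 2 * (96 * noise_scale)" .
  qed (use \<gamma> noise_scale_pos phat_bounds in auto)
  then show ?thesis
    by (simp add: deviation_eq_centered_sum[OF i])
qed

end

lemma prob_deviation_ge_powr:
  assumes n: "2 \<le> n" and i: "i < n" and \<gamma>: "0 < \<gamma>" "\<gamma> \<le> 1"
    and m: "3840 / \<gamma>\<^sup>2 * real n * ln (real n) * (Ssum n r Us)\<^sup>2 \<le> m"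
  shows "measure_pmf.prob (delta_pmf n r Us m)
           {\<delta>. \<gamma> \<le> \<bar>alpha * Bdiag n r Us m U q \<delta> i - Rdiag n r Us m U q a b \<delta> i\<bar>}
         \<le> 2 * real n powr (-10)"
proof -
  have ln: "0 < ln (real n)" using n by simp
  have "0 < 3840 / \<gamma>\<^sup>2 * real n * ln (real n) * (Ssum n r Us)\<^sup>2"
    using \<gamma> n ln Ssum_pos by simp
  then have m_pos: "0 < m" using m by linarith
  have "3840 * ln (real n) * noise_scale m \<le> \<gamma>\<^sup>2"
    using m m_pos \<gamma> by (simp add: noise_scale_def field_simps)
  then have "exp (- (\<gamma>\<^sup>2 / (384 * noise_scale m))) \<le> exp (- 10 * ln (real n))"
    using noise_scale_pos[OF m_pos] by (simp add: field_simps)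
  also have "\<dots> = real n powr (-10)"
    using n by (simp add: powr_def)
  finally show ?thesis
    using prob_deviation_ge[OF m_pos i \<gamma>] by linarith
qed

lemma prob_all_deviations_lt:
  assumes n: "2 \<le> n" and \<gamma>: "0 < \<gamma>" "\<gamma> \<le> 1"
    and m: "3840 / \<gamma>\<^sup>2 * real n * ln (real n) * (Ssum n r Us)\<^sup>2 \<le> m"
  shows "1 - 2 * real n powr (-9) \<le> measure_pmf.prob (delta_pmf n r Us m)
           {\<delta>. \<forall>i<n. \<bar>alpha * Bdiag n r Us m U q \<delta> i - Rdiag n r Us m U q a b \<delta> i\<bar> < \<gamma>}"
proof -
  define bad where "bad i = {\<delta>. \<gamma> \<le> \<bar>alpha * Bdiag n r Us m U q \<delta> i - Rdiag n r Us m U q a b \<delta> i\<bar>}" for i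
  have "measure_pmf.prob (delta_pmf n r Us m) (\<Union>i<n. bad i)
      \<le> (\<Sum>i<n. measure_pmf.prob (delta_pmf n r Us m) (bad i))"
    by (rule measure_pmf.finite_measure_subadditive_finite) auto
  also have "\<dots> \<le> real n * (2 * real n powr (-10))"
    using sum_bounded_above[of "{..<n}", OF prob_deviation_ge_powr[OF n _ \<gamma> m]] by (simp add: bad_def)
  also have "\<dots> = 2 * real n powr (-9)"
    using n by (simp add: powr_mult_base)
  finally have "1 - 2 * real n powr (-9) \<le> 1 - measure_pmf.prob (delta_pmf n r Us m) (\<Union>i<n. bad i)"
    by simp
  also have "\<dots> = measure_pmf.prob (delta_pmf n r Us m) (UNIV - (\<Union>i<n. bad i))"
    using measure_pmf.prob_compl[of "\<Union>i<n. bad i" "delta_pmf n r Us m"] by simp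
  also have "UNIV - (\<Union>i<n. bad i)
      = {\<delta>. \<forall>i<n. \<bar>alpha * Bdiag n r Us m U q \<delta> i - Rdiag n r Us m U q a b \<delta> i\<bar> < \<gamma>}"
    by (auto simp: bad_def not_le)
  finally show ?thesis .
qed

lemma prob_vnorm_deviation_le:
  assumes n: "2 \<le> n" and \<gamma>: "0 < \<gamma>" "\<gamma> \<le> 1"
    and m: "3840 / \<gamma>\<^sup>2 * real n * ln (real n) * (Ssum n r Us)\<^sup>2 \<le> m"
    and c: "vnorm n c = 1"
  shows "1 - 2 * real n powr (-9) \<le> measure_pmf.prob (delta_pmf n r Us m)
           {\<delta>. vnorm n (\<lambda>i. (alpha * Bdiag n r Us m U q \<delta> i - Rdiag n r Us m U q a b \<delta> i) * c i)
                \<le> \<gamma> * vnorm n b}"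
proof -
  have "vnorm n b = 1" using b_unit by (simp add: vnorm_def)
  then have "{\<delta>. \<forall>i<n. \<bar>alpha * Bdiag n r Us m U q \<delta> i - Rdiag n r Us m U q a b \<delta> i\<bar> < \<gamma>}
      \<subseteq> {\<delta>. vnorm n (\<lambda>i. (alpha * Bdiag n r Us m U q \<delta> i - Rdiag n r Us m U q a b \<delta> i) * c i)
             \<le> \<gamma> * vnorm n b}"
  proof safe
    fix \<delta> assume "\<forall>i<n. \<bar>alpha * Bdiag n r Us m U q \<delta> i - Rdiag n r Us m U q a b \<delta> i\<bar> < \<gamma>"
    then have "vnorm n (\<lambda>i. (alpha * Bdiag n r Us m U q \<delta> i - Rdiag n r Us m U q a b \<delta> i) * c i) \<le> \<gamma> * vnorm n c"
      by (intro vnorm_mult_le) (simp add: less_imp_le)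
    with c \<open>vnorm n b = 1\<close>
    show "vnorm n (\<lambda>i. (alpha * Bdiag n r Us m U q \<delta> i - Rdiag n r Us m U q a b \<delta> i) * c i) \<le> \<gamma> * vnorm n b"
      by simp
  qed
  then have "measure_pmf.prob (delta_pmf n r Us m)
      {\<delta>. \<forall>i<n. \<bar>alpha * Bdiag n r Us m U q \<delta> i - Rdiag n r Us m U q a b \<delta> i\<bar> < \<gamma>}
    \<le> measure_pmf.prob (delta_pmf n r Us m)
      {\<delta>. vnorm n (\<lambda>i. (alpha * Bdiag n r Us m U q \<delta> i - Rdiag n r Us m U q a b \<delta> i) * c i)
             \<le> \<gamma> * vnorm n b}"
    by (rule measure_pmf.finite_measure_mono) simp
  with prob_all_deviations_lt[OF n \<gamma> m] show ?thesis
    by linarith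
qed

end

theorem mainTheorem8:
  "\<exists>C>0. \<forall>(n::nat) (r::nat) (Us::nat \<Rightarrow> nat \<Rightarrow> real) (U::nat \<Rightarrow> nat \<Rightarrow> real) (q::nat)
      (a::nat \<Rightarrow> real) (b::nat \<Rightarrow> real) (c::nat \<Rightarrow> real) (\<gamma>::real) (m::real).
    orthonormal_cols n r Us \<longrightarrow>
    (\<forall>l<r. vnorm n (\<lambda>i. U i l) = 1) \<longrightarrow>
    (\<forall>i<n. \<forall>l<r. \<bar>U i l\<bar> \<le> 2 * row_norm r Us i) \<longrightarrow>
    q < r \<longrightarrow>
    vnorm n a = 1 \<longrightarrow> vnorm n b = 1 \<longrightarrow> vnorm n c = 1 \<longrightarrow>
    (\<forall>i<n. \<bar>a i\<bar> \<le> 2 * row_norm r Us i \<and> \<bar>b i\<bar> \<le> 2 * row_norm r Us i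
           \<and> \<bar>c i\<bar> \<le> 2 * row_norm r Us i) \<longrightarrow>
    0 < \<gamma> \<longrightarrow> \<gamma> \<le> 1 \<longrightarrow>
    m \<ge> C / \<gamma>\<^sup>2 * real n * ln (real n) * (Ssum n r Us)\<^sup>2 \<longrightarrow>
    measure_pmf.prob (delta_pmf n r Us m)
      {\<delta>. vnorm n (\<lambda>i.
              (vinner n (\<lambda>j. U j q) a * vinner n (\<lambda>j. U j q) b * Bdiag n r Us m U q \<delta> i
               - Rdiag n r Us m U q a b \<delta> i) * c i)
           \<le> \<gamma> * vnorm n b}
      \<ge> 1 - 2 * real n powr (-9)"
proof (intro exI[of _ 3840] conjI allI impI)
  fix n r :: nat and Us U :: "nat \<Rightarrow> nat \<Rightarrow> real" and q :: nat and a b c :: "nat \<Rightarrow> real" and \<gamma> m :: real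
  assume U: "\<forall>l<r. vnorm n (\<lambda>i. U i l) = 1" "\<forall>i<n. \<forall>l<r. \<bar>U i l\<bar> \<le> 2 * row_norm r Us i" "q < r"
    and unit: "vnorm n a = 1" "vnorm n b = 1" "vnorm n c = 1"
    and abc: "\<forall>i<n. \<bar>a i\<bar> \<le> 2 * row_norm r Us i \<and> \<bar>b i\<bar> \<le> 2 * row_norm r Us i \<and> \<bar>c i\<bar> \<le> 2 * row_norm r Us i"
    and \<gamma>: "0 < \<gamma>" "\<gamma> \<le> 1" and m: "3840 / \<gamma>\<^sup>2 * real n * ln (real n) * (Ssum n r Us)\<^sup>2 \<le> m"
  have sum_sq: "(\<Sum>j<n. (x j)\<^sup>2) = 1" if "vnorm n x = 1" for x
    using that by (simp add: vnorm_def)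
  have "n \<noteq> 0" using sum_sq[OF unit(1)] by (cases n) auto
  then consider "n = 1" | "2 \<le> n" by linarith
  then show "1 - 2 * real n powr (-9) \<le> measure_pmf.prob (delta_pmf n r Us m)
      {\<delta>. vnorm n (\<lambda>i. (vinner n (\<lambda>j. U j q) a * vinner n (\<lambda>j. U j q) b * Bdiag n r Us m U q \<delta> i
               - Rdiag n r Us m U q a b \<delta> i) * c i) \<le> \<gamma> * vnorm n b}"
  proof cases
    case 1
    then have "1 - 2 * real n powr (-9) \<le> 0" by simp
    then show ?thesis using measure_nonneg order_trans by blast
  next
    case 2
    interpret incoherent_vectors n r Us U q a b
      using U abc unit by unfold_locales (auto intro: sum_sq)
    show ?thesis
      using prob_vnorm_deviation_le[OF 2 \<gamma> m unit(3)] by simp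
  qed
qed simp

end
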